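(* For integers $n\ge 1$ and $0\le k\le n$, the number of ordered pairs $(P,Q)$ of $n$-step walks starting at the origin, each step being $(1,0)$ (E) or $(0,1)$ (N), whose vertex sets have exactly $k$ points in common other than the origin, is $2^k\binom{2n-k}{n}$.
   Context: An $n$-step walk starting at the origin is a sequence of lattice points $v_0=(0,0),v_1,\dots,v_n$ with $v_i-v_{i-1}\in\{(1,0),(0,1)\}$; its vertex set is $\{v_0,\dots,v_n\}$. The endpoints of the two walks are not required to coincide. *)

theory Defs
  imports Main
begin

text \<open>A walk of n steps is encoded by its list of steps; True = E = (1,0), False = N = (0,1).\<close>

definition walk_vertex :: "bool list \<Rightarrow> nat \<Rightarrow> int \<times> int" where
  "walk_vertex s i = (int (length (filter id (take i s))),
                      int (length (filter Not (take i s))))"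

definition walk_vertices :: "bool list \<Rightarrow> (int \<times> int) set" where
  "walk_vertices s = {walk_vertex s i | i. i \<le> length s}"

definition walks :: "nat \<Rightarrow> bool list set" where
  "walks n = {s. length s = n}"

end

theory Submission
  imports Defs
begin

text \<open>
  The coordinates of the \<open>i\<close>-th vertex of a walk sum to \<open>i\<close>, so two walks can only share a
  vertex reached by both after the same number of steps, and they do so exactly when both have
  taken the same number of E-steps by then. The common vertices of \<open>P\<close> and \<open>Q\<close> are thus the
  visits to \<open>0\<close> of the difference of their E-step counts, a walk on \<open>\<int>\<close> whose steps are
  \<open>+1\<close> and \<open>-1\<close> (one step pair each) or \<open>0\<close> (two step pairs). Conditioning on the first
  step pair, the number of pairs of \<open>m\<close>-step walks whose difference, started at \<open>d\<close>, visits
  \<open>0\<close> exactly \<open>k\<close> times satisfies a recurrence in \<open>m\<close> that is solved by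
  \<open>zero_visit_count m \<bar>d\<bar> k\<close>; the theorem is the case \<open>d = 0\<close>, where the origin accounts
  for one visit.
\<close>

lemma binomial_Suc_Suc_twice:
  "Suc (Suc n) choose Suc (Suc i) = (n choose i) + 2 * (n choose Suc i) + (n choose Suc (Suc i))"
  by simp

definition zero_visit_count :: "nat \<Rightarrow> nat \<Rightarrow> nat \<Rightarrow> nat" where
  "zero_visit_count m D k = (case k of
     0 \<Rightarrow> (\<Sum>i<D. (2*m+1) choose (m+1+i))
   | Suc j \<Rightarrow> if j \<le> m then 2^j * ((2*m-j) choose (m+D)) else 0)"

lemma zero_visit_count_0: "zero_visit_count 0 D k = of_bool (k = of_bool (D = 0))"
  by (cases k; cases D) (auto simp: zero_visit_count_def lessThan_Suc_eq_insert_0 binomial_eq_0)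

lemma zero_visit_count_Suc_origin:
  "zero_visit_count (Suc m) 0 (Suc k) = 2 * zero_visit_count m 0 k + 2 * zero_visit_count m 1 k"
proof (cases k)
  case 0
  have "Suc (Suc (2*m)) choose Suc m = 2 * (Suc (2*m) choose Suc m)"
    using binomial_symmetric[of m "Suc (2*m)"] by simp
  then show ?thesis using 0 by (simp add: zero_visit_count_def)
next
  case (Suc j)
  show ?thesis
  proof (cases "j \<le> m")
    case True
    then have "2 * Suc m - Suc j = Suc (2*m - j)" by simp
    then show ?thesis using True Suc by (simp add: zero_visit_count_def algebra_simps)
  qed (simp add: Suc zero_visit_count_def)
qed

lemma zero_visit_count_Suc_off_origin:
  assumes "D \<ge> 1"
  shows "zero_visit_count (Suc m) D k = 2 * zero_visit_count m D k + zero_visit_count m (D+1) k + zero_visit_count m (D-1) k"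
proof (cases k)
  case 0
  define c where "c i = (2*m+1) choose (m+i)" for i
  have hit: "zero_visit_count m D' 0 = (\<Sum>i<D'. c (Suc i))" for D'
    by (simp add: zero_visit_count_def c_def)
  have "zero_visit_count (Suc m) D 0 = (\<Sum>i<D. c i + 2 * c (Suc i) + c (Suc (Suc i)))"
    using binomial_Suc_Suc_twice[of "2*m+1" "m+_"]
    by (simp add: zero_visit_count_def c_def del: binomial_Suc_Suc)
  moreover have "(\<Sum>i<D. c i) = c 1 + zero_visit_count m (D-1) 0"
    using sum.lessThan_Suc_shift[of c "D-1"] binomial_symmetric[of m "2*m+1"] assms
    by (simp add: hit c_def)
  moreover have "(\<Sum>i<D. c (Suc (Suc i))) + c 1 = zero_visit_count m (D+1) 0"
    using sum.lessThan_Suc_shift[of "\<lambda>i. c (Suc i)" D] by (simp add: hit)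
  ultimately show ?thesis
    using 0 by (simp add: hit sum.distrib sum_distrib_left)
next
  case (Suc j)
  consider "j \<le> m" | "j = Suc m" | "j > Suc m" by linarith
  then show ?thesis
  proof cases
    case 1
    then have "2 * Suc m - j = Suc (Suc (2*m - j))" "Suc m + D = Suc (Suc (m + D - 1))"
      using assms by simp_all
    then show ?thesis
      using 1 Suc binomial_Suc_Suc_twice[of "2*m - j" "m + D - 1"] assms
      by (simp add: zero_visit_count_def algebra_simps del: binomial_Suc_Suc)
  qed (use Suc assms in \<open>auto simp: zero_visit_count_def\<close>)
qed

definition step_diff :: "bool \<Rightarrow> bool \<Rightarrow> int" where
  "step_diff p q = of_bool p - of_bool q"

fun zero_visits :: "int \<Rightarrow> bool list \<Rightarrow> bool list \<Rightarrow> nat" where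
  "zero_visits d (p # P) (q # Q) = of_bool (d = 0) + zero_visits (d + step_diff p q) P Q"
| "zero_visits d _ _ = of_bool (d = 0)"

definition visit_pairs :: "nat \<Rightarrow> int \<Rightarrow> nat \<Rightarrow> (bool list \<times> bool list) set" where
  "visit_pairs m d k = {(P, Q) \<in> walks m \<times> walks m. zero_visits d P Q = k}"

lemma finite_walks: "finite (walks n)"
  using finite_lists_length_eq[of "UNIV :: bool set" n] by (simp add: walks_def)

lemma zero_visits_origin_pos: "zero_visits 0 P Q > 0"
  by (cases P; cases Q) auto

lemma visit_pairs_Suc:
  "visit_pairs (Suc m) d (k + of_bool (d = 0)) =
     (\<Union>(p, q). map_prod (Cons p) (Cons q) ` visit_pairs m (d + step_diff p q) k)"
  by (fastforce simp: visit_pairs_def walks_def length_Suc_conv)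

lemma card_visit_pairs_Suc:
  "card (visit_pairs (Suc m) d (k + of_bool (d = 0))) =
     2 * card (visit_pairs m d k) + card (visit_pairs m (d + 1) k) + card (visit_pairs m (d - 1) k)"
proof -
  have finite: "finite (visit_pairs m e k)" for e
    by (rule finite_subset[of _ "walks m \<times> walks m"]) (auto simp: visit_pairs_def finite_walks)
  have inj: "inj_on (map_prod (Cons p) (Cons q)) A" for p q and A :: "(bool list \<times> bool list) set"
    by (auto simp: inj_on_def)
  have "card (visit_pairs (Suc m) d (k + of_bool (d = 0))) =
      (\<Sum>(p, q) \<in> UNIV. card (visit_pairs m (d + step_diff p q) k))"
    unfolding visit_pairs_Suc
    by (subst card_UN_disjoint) (auto simp: finite card_image[OF inj] case_prod_unfold)
  moreover have bool_pairs:
    "(UNIV :: (bool \<times> bool) set) = {(True, True), (True, False), (False, True), (False, False)}"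
    by auto
  ultimately show ?thesis
    unfolding bool_pairs by (simp add: step_diff_def)
qed

lemma card_visit_pairs: "card (visit_pairs m d k) = zero_visit_count m (nat \<bar>d\<bar>) k"
proof (induction m arbitrary: d k)
  case 0
  have "visit_pairs 0 d k = (if k = of_bool (d = 0) then {([], [])} else {})"
    by (auto simp: visit_pairs_def walks_def)
  then show ?case by (simp add: zero_visit_count_0)
next
  case (Suc m)
  show ?case
  proof (cases "d = 0")
    case True
    show ?thesis
    proof (cases k)
      case 0
      then have "visit_pairs (Suc m) d k = {}"
        using True zero_visits_origin_pos by (auto simp: visit_pairs_def)
      then show ?thesis using 0 True by (simp add: zero_visit_count_def)
    next
      case (Suc k')
      then show ?thesis
        using True card_visit_pairs_Suc[of m d k'] Suc.IH zero_visit_count_Suc_origin[of m k'] by simp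
    qed
  next
    case False
    define D where "D = nat \<bar>d\<bar>"
    have "{nat \<bar>d + 1\<bar>, nat \<bar>d - 1\<bar>} = {D + 1, D - 1}" "D \<ge> 1"
      using False by (auto simp: D_def)
    then show ?thesis
      using False card_visit_pairs_Suc[of m d k] Suc.IH zero_visit_count_Suc_off_origin[of D m k]
      by (auto simp: D_def doubleton_eq_iff)
  qed
qed

lemma walk_vertex_0 [simp]: "walk_vertex s 0 = (0, 0)"
  by (simp add: walk_vertex_def)

lemma fst_walk_vertex_Cons_Suc [simp]:
  "fst (walk_vertex (p # s) (Suc i)) = of_bool p + fst (walk_vertex s i)"
  by (simp add: walk_vertex_def)

lemma walk_vertex_coord_sum:
  "i \<le> length s \<Longrightarrow> fst (walk_vertex s i) + snd (walk_vertex s i) = int i"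
  using sum_length_filter_compl[of id "take i s"] by (simp add: walk_vertex_def)

lemma walk_vertex_index_eq:
  "walk_vertex s i = walk_vertex t j \<Longrightarrow> i \<le> length s \<Longrightarrow> j \<le> length t \<Longrightarrow> i = j"
  using walk_vertex_coord_sum[of i s] walk_vertex_coord_sum[of j t] by simp

lemma inj_on_walk_vertex: "inj_on (walk_vertex s) {..length s}"
  by (auto intro: inj_onI walk_vertex_index_eq)

lemma walk_vertex_eq_iff_fst:
  assumes "i \<le> length s" "i \<le> length t"
  shows "walk_vertex s i = walk_vertex t i \<longleftrightarrow> fst (walk_vertex s i) = fst (walk_vertex t i)"
  using walk_vertex_coord_sum[OF assms(1)] walk_vertex_coord_sum[OF assms(2)]
  by (auto simp: prod_eq_iff)

lemma zero_visits_eq_sum: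
  "length P = length Q \<Longrightarrow>
     zero_visits d P Q = (\<Sum>i\<le>length P. of_bool (d + fst (walk_vertex P i) = fst (walk_vertex Q i)))"
proof (induction P arbitrary: d Q)
  case Nil
  then show ?case by simp
next
  case (Cons p P)
  then obtain q Q' where Q: "Q = q # Q'" "length Q' = length P"
    by (cases Q) auto
  have shift: "d + step_diff p q + fst (walk_vertex P i) = fst (walk_vertex Q' i) \<longleftrightarrow>
      d + fst (walk_vertex (p # P) (Suc i)) = fst (walk_vertex Q (Suc i))" for i
    by (auto simp: Q step_diff_def)
  have "zero_visits d (p # P) Q = of_bool (d = 0) +
      (\<Sum>i\<le>length P. of_bool (d + step_diff p q + fst (walk_vertex P i) = fst (walk_vertex Q' i)))"
    using Cons.IH Q by simp
  then show ?case
    by (simp only: length_Cons sum.atMost_Suc_shift shift) simp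
qed

lemma card_common_vertices:
  assumes "length P = length Q"
  shows "card (walk_vertices P \<inter> walk_vertices Q) = zero_visits 0 P Q"
proof -
  define I where "I = {i \<in> {..length P}. walk_vertex P i = walk_vertex Q i}"
  have "walk_vertices P \<inter> walk_vertices Q = walk_vertex P ` I"
  proof (intro equalityI subsetI)
    fix x assume "x \<in> walk_vertices P \<inter> walk_vertices Q"
    then obtain i j where "x = walk_vertex P i" "x = walk_vertex Q j" "i \<le> length P" "j \<le> length Q"
      unfolding walk_vertices_def by blast
    moreover from this have "i = j"
      using walk_vertex_index_eq by metis
    ultimately have "i \<in> I" "x = walk_vertex P i"
      by (auto simp: I_def)
    then show "x \<in> walk_vertex P ` I" by blast
  next
    fix x assume "x \<in> walk_vertex P ` I"
    then obtain i where "i \<le> length P" "i \<le> length Q" "x = walk_vertex P i" "x = walk_vertex Q i"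
      using assms by (auto simp: I_def)
    then show "x \<in> walk_vertices P \<inter> walk_vertices Q"
      unfolding walk_vertices_def by blast
  qed
  moreover have "inj_on (walk_vertex P) I"
    by (rule inj_on_subset[OF inj_on_walk_vertex]) (auto simp: I_def)
  ultimately have "card (walk_vertices P \<inter> walk_vertices Q) = card I"
    by (simp add: card_image)
  also have "I = {..length P} \<inter> {i. fst (walk_vertex P i) = fst (walk_vertex Q i)}"
    using walk_vertex_eq_iff_fst assms by (auto simp: I_def)
  also have "card \<dots> = zero_visits 0 P Q"
    by (simp add: zero_visits_eq_sum[OF assms])
  finally show ?thesis .
qed

theorem theorem3:
  fixes n k :: nat
  assumes "n \<ge> 1" and "k \<le> n"
  shows "card {(P, Q). P \<in> walks n \<and> Q \<in> walks n \<and>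
            card (walk_vertices P \<inter> walk_vertices Q - {(0, 0)}) = k}
         = 2 ^ k * ((2 * n - k) choose n)"
proof -
  have "(0, 0) \<in> walk_vertices P" for P
    unfolding walk_vertices_def by (auto intro: exI[of _ 0])
  then have "card (walk_vertices P \<inter> walk_vertices Q - {(0, 0)}) = zero_visits 0 P Q - 1"
    if "P \<in> walks n" "Q \<in> walks n" for P Q
    using that card_common_vertices[of P Q] by (simp add: walks_def)
  then have "{(P, Q). P \<in> walks n \<and> Q \<in> walks n \<and>
               card (walk_vertices P \<inter> walk_vertices Q - {(0, 0)}) = k} = visit_pairs n 0 (Suc k)"
    using zero_visits_origin_pos by (fastforce simp: visit_pairs_def)
  then show ?thesis
    using assms(2) by (simp add: card_visit_pairs zero_visit_count_def)
qed

end
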